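(* The alternating oriented matroid $C^{6,4}$ is not pure.
   Context: The alternating oriented matroid $C^{n,d}$ on $[n]$ has as circuits exactly the signed sets $(I^{odd},I^{even})$ and $(I^{even},I^{odd})$, where $I=\{i_1<\dots<i_{d+1}\}$ ranges over $(d+1)$-subsets of $[n]$, $I^{odd}=\{i_1,i_3,\dots\}$, $I^{even}=\{i_2,i_4,\dots\}$. Two subsets $I,J\subseteq[n]$ are separated if no circuit $X$ satisfies $X^+\subseteq I\setminus J$, $X^-\subseteq J\setminus I$; an oriented matroid is pure if every pairwise-separated collection of subsets that is maximal by inclusion has the maximum possible cardinality among pairwise-separated collections. *)

theory Defs
  imports Main
begin

text \<open>Odd-position and even-position elements of a finite set of naturals,
  listed in increasing order i_1 < i_2 < ... (positions counted from 1).\<close>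
definition odd_part :: "nat set \<Rightarrow> nat set" where
  "odd_part I = {sorted_list_of_set I ! k | k. k < card I \<and> even k}"

definition even_part :: "nat set \<Rightarrow> nat set" where
  "even_part I = {sorted_list_of_set I ! k | k. k < card I \<and> odd k}"

text \<open>Circuits (signed sets, pairs (X^+, X^-)) of the alternating oriented matroid C^{n,d} on [n].\<close>
definition alt_circuits :: "nat \<Rightarrow> nat \<Rightarrow> (nat set \<times> nat set) set" where
  "alt_circuits n d =
     (\<Union>I \<in> {I. I \<subseteq> {1..n} \<and> card I = d + 1}.
        {(odd_part I, even_part I), (even_part I, odd_part I)})"

definition separated :: "('a set \<times> 'a set) set \<Rightarrow> 'a set \<Rightarrow> 'a set \<Rightarrow> bool" where
  "separated C I J \<longleftrightarrow> \<not> (\<exists>X \<in> C. fst X \<subseteq> I - J \<and> snd X \<subseteq> J - I)"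

definition pairwise_separated :: "'a set \<Rightarrow> ('a set \<times> 'a set) set \<Rightarrow> 'a set set \<Rightarrow> bool" where
  "pairwise_separated E C F \<longleftrightarrow> F \<subseteq> Pow E \<and> (\<forall>I\<in>F. \<forall>J\<in>F. I \<noteq> J \<longrightarrow> separated C I J)"

definition maximal_separated :: "'a set \<Rightarrow> ('a set \<times> 'a set) set \<Rightarrow> 'a set set \<Rightarrow> bool" where
  "maximal_separated E C F \<longleftrightarrow> pairwise_separated E C F \<and>
     (\<forall>G. pairwise_separated E C G \<and> F \<subseteq> G \<longrightarrow> G = F)"

definition pure :: "'a set \<Rightarrow> ('a set \<times> 'a set) set \<Rightarrow> bool" where
  "pure E C \<longleftrightarrow> (\<forall>F. maximal_separated E C F \<longrightarrow>
      card F = Max {card G | G. pairwise_separated E C G})"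

end

theory Submission
  imports Defs
begin

text \<open>The twelve circuits of \<open>C\<^sup>6\<^sup>,\<^sup>4\<close> come from the six 5-subsets of \<open>[6]\<close>.
  Removing nine suitable subsets from the power set of \<open>[6]\<close> leaves a pairwise separated
  family of 55 sets which cannot be enlarged, because each removed set fails to be separated
  from some member of the family. Removing seven other subsets leaves a pairwise separated
  family of 57 sets. So there are inclusion-maximal separated families of different sizes.\<close>

lemma set_subset_if_in_subseqs: "xs \<in> set (subseqs ys) \<Longrightarrow> set xs \<subseteq> set ys"
  using subseqs_powset[of ys] by blast

lemma sorted_wrt_subseqs:
  "sorted_wrt P ys \<Longrightarrow> xs \<in> set (subseqs ys) \<Longrightarrow> sorted_wrt P xs"
proof (induction ys arbitrary: xs)
  case (Cons y ys)
  then show ?case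
    by (fastforce simp: Let_def dest: set_subset_if_in_subseqs)
qed simp

lemma inj_on_set_strict_sorted: "inj_on set {xs :: 'a::linorder list. sorted_wrt (<) xs}"
  by (rule inj_onI, rule sorted_distinct_set_unique) (auto simp: strict_sorted_iff)

lemma card_set_image_strict_sorted:
  fixes xss :: "'a::linorder list list"
  assumes "distinct xss" "\<forall>xs\<in>set xss. sorted_wrt (<) xs"
  shows "card (set ` set xss) = length xss"
proof -
  have "inj_on set (set xss)"
    by (rule inj_on_subset[OF inj_on_set_strict_sorted]) (use assms(2) in auto)
  then show ?thesis
    using assms(1) by (simp add: card_image distinct_card)
qed

lemma sorted_list_of_set_strict_sorted:
  "sorted_wrt (<) xs \<Longrightarrow> sorted_list_of_set (set xs) = xs"
  by (simp add: sorted_list_of_set.idem_if_sorted_distinct strict_sorted_iff)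

lemma odd_part_set:
  "sorted_wrt (<) xs \<Longrightarrow> odd_part (set xs) = set (nths xs (Collect even))"
  by (simp add: odd_part_def set_nths sorted_list_of_set_strict_sorted distinct_card
      strict_sorted_iff)

lemma even_part_set:
  "sorted_wrt (<) xs \<Longrightarrow> even_part (set xs) = set (nths xs (Collect odd))"
  by (simp add: even_part_def set_nths sorted_list_of_set_strict_sorted distinct_card
      strict_sorted_iff)

lemma subsets_of_card_eq_subseqs:
  assumes "distinct ys"
  shows "{I. I \<subseteq> set ys \<and> card I = k} = set ` set (filter (\<lambda>xs. length xs = k) (subseqs ys))"
proof -
  have card_set: "card (set xs) = length xs" if "xs \<in> set (subseqs ys)" for xs
    using subseqs_distinctD[OF that assms] by (simp add: distinct_card)
  show ?thesis
  proof (intro equalityI subsetI)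
    fix I assume "I \<in> {I. I \<subseteq> set ys \<and> card I = k}"
    then obtain xs where "xs \<in> set (subseqs ys)" "I = set xs" "card I = k"
      using subset_subseqs by blast
    then show "I \<in> set ` set (filter (\<lambda>xs. length xs = k) (subseqs ys))"
      using card_set by auto
  qed (auto simp: card_set dest: set_subset_if_in_subseqs)
qed

lemma Pow_Diff_eq_subseqs:
  fixes ys :: "'a::linorder list"
  assumes "sorted_wrt (<) ys" "\<forall>xs\<in>set M. sorted_wrt (<) xs"
  shows "Pow (set ys) - set ` set M = set ` set (filter (\<lambda>xs. xs \<notin> set M) (subseqs ys))"
proof -
  have "set xs \<in> set ` set M \<longleftrightarrow> xs \<in> set M" if "xs \<in> set (subseqs ys)" for xs
    using sorted_wrt_subseqs[OF assms(1) that] assms(2)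
    by (intro inj_on_image_mem_iff[OF inj_on_set_strict_sorted]) auto
  then show ?thesis
    by (auto simp flip: subseqs_powset)
qed

lemma alt_circuits_subseqs:
  "alt_circuits n d =
     (\<Union>xs \<in> set (filter (\<lambda>xs. length xs = Suc d) (subseqs [1..<Suc n])).
        {(set (nths xs (Collect even)), set (nths xs (Collect odd))),
         (set (nths xs (Collect odd)), set (nths xs (Collect even)))})"
proof -
  have "{1..n} = set [1..<Suc n]"
    by auto
  moreover have "sorted_wrt (<) xs" if "xs \<in> set (subseqs [1..<Suc n])" for xs
    using sorted_wrt_subseqs[OF sorted_wrt_upt that] .
  ultimately show ?thesis
    using subsets_of_card_eq_subseqs[of "[1..<Suc n]" "Suc d"]
    by (simp add: alt_circuits_def odd_part_set even_part_set)
qed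

lemma finite_cards_pairwise_separated:
  assumes "finite E"
  shows "finite {card G | G. pairwise_separated E C G}"
proof (rule finite_subset)
  show "{card G | G. pairwise_separated E C G} \<subseteq> {..card (Pow E)}"
  proof
    fix n assume "n \<in> {card G | G. pairwise_separated E C G}"
    then obtain G where "n = card G" "G \<subseteq> Pow E"
      by (auto simp: pairwise_separated_def)
    then show "n \<in> {..card (Pow E)}"
      using assms by (simp add: card_mono)
  qed
qed simp

lemma pairwise_separatedI:
  "F \<subseteq> Pow E \<Longrightarrow> \<forall>I\<in>F. \<forall>J\<in>F. separated C I J \<Longrightarrow> pairwise_separated E C F"
  by (simp add: pairwise_separated_def)

lemma maximal_separatedI:
  assumes "pairwise_separated E C F"
    and "\<forall>S\<in>Pow E - F. \<exists>J\<in>F. \<not> separated C S J"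
  shows "maximal_separated E C F"
  unfolding maximal_separated_def
proof (intro conjI allI impI assms(1))
  fix G assume G: "pairwise_separated E C G \<and> F \<subseteq> G"
  then have "G \<subseteq> Pow E" and sep: "\<forall>I\<in>G. \<forall>J\<in>G. I \<noteq> J \<longrightarrow> separated C I J"
    by (simp_all add: pairwise_separated_def)
  have "S \<in> F" if "S \<in> G" for S
  proof (rule ccontr)
    assume "S \<notin> F"
    moreover have "S \<in> Pow E"
      using \<open>G \<subseteq> Pow E\<close> that by blast
    ultimately obtain J where "J \<in> F" "\<not> separated C S J"
      using assms(2) by blast
    moreover have "J \<in> G" "S \<noteq> J"
      using G \<open>J \<in> F\<close> \<open>S \<notin> F\<close> by auto
    ultimately show False
      using sep that by blast
  qed
  then show "G = F"
    using G by blast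
qed

lemma not_pure_if_larger_separated:
  assumes "finite E" "maximal_separated E C F" "pairwise_separated E C G" "card F < card G"
  shows "\<not> pure E C"
proof
  assume "pure E C"
  then have "card F = Max {card G | G. pairwise_separated E C G}"
    using assms(2) by (simp add: pure_def)
  also have "\<dots> \<ge> card G"
    using assms(3) by (intro Max_ge finite_cards_pairwise_separated[OF assms(1)]) auto
  finally show False
    using assms(4) by simp
qed

lemma alt_circuits_6_4:
  "alt_circuits 6 4 =
     {({1,3,5}, {2,4}), ({2,4}, {1,3,5}), ({1,3,6}, {2,4}), ({2,4}, {1,3,6}),
      ({1,3,6}, {2,5}), ({2,5}, {1,3,6}), ({1,4,6}, {2,5}), ({2,5}, {1,4,6}),
      ({1,4,6}, {3,5}), ({3,5}, {1,4,6}), ({2,4,6}, {3,5}), ({3,5}, {2,4,6})}"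
proof -
  have "[1..<Suc 6] = [1, 2, 3, 4, 5, 6::nat]"
    by (simp add: upt_rec)
  then show ?thesis
    unfolding alt_circuits_subseqs by (simp add: nths_Cons Let_def insert_commute)
qed

text \<open>The removed subsets are given as increasing lists, so that membership among them is
  decided by list equality rather than set equality.\<close>
definition subsets6_except :: "nat list list \<Rightarrow> nat set set" where
  "subsets6_except M = Pow {1..6} - set ` set M"

lemma subsets6_except_eq_subseqs:
  assumes "\<forall>xs\<in>set M. sorted_wrt (<) xs"
  shows "subsets6_except M = set ` set (filter (\<lambda>xs. xs \<notin> set M) (subseqs [1, 2, 3, 4, 5, 6]))"
proof -
  have "{1..6::nat} = set [1, 2, 3, 4, 5, 6]"
    by auto
  then show ?thesis
    unfolding subsets6_except_def by (simp only:) (rule Pow_Diff_eq_subseqs[OF _ assms], simp)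
qed

lemma card_subsets6_except:
  assumes "distinct M" "\<forall>xs\<in>set M. sorted_wrt (<) xs" "\<forall>xs\<in>set M. set xs \<subseteq> {1..6}"
  shows "card (subsets6_except M) = 64 - length M"
proof -
  have "card (Pow {1..6::nat}) = 64"
    by (simp add: card_Pow)
  moreover have "card (set ` set M) = length M"
    using card_set_image_strict_sorted assms(1,2) .
  moreover have "set ` set M \<subseteq> Pow {1..6}"
    using assms(3) by auto
  ultimately show ?thesis
    by (simp add: subsets6_except_def card_Diff_subset)
qed

lemma maximal_separated_subsets6_except:
  "maximal_separated {1..6} (alt_circuits 6 4)
     (subsets6_except [[2,5], [1,3,5], [1,3,6], [1,4,6], [2,3,5], [2,4,5], [2,4,6], [1,2,4,6], [1,3,5,6]])"
    (is "maximal_separated _ _ (subsets6_except ?M)")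
proof (rule maximal_separatedI)
  have sorted: "\<forall>xs\<in>set ?M. sorted_wrt (<) xs"
    by simp
  show "pairwise_separated {1..6} (alt_circuits 6 4) (subsets6_except ?M)"
  proof (rule pairwise_separatedI)
    show "subsets6_except ?M \<subseteq> Pow {1..6}"
      by (auto simp: subsets6_except_def)
    show "\<forall>I\<in>subsets6_except ?M. \<forall>J\<in>subsets6_except ?M. separated (alt_circuits 6 4) I J"
      unfolding alt_circuits_6_4 subsets6_except_eq_subseqs[OF sorted]
      by (simp add: separated_def Let_def)
  qed
  have "Pow {1..6} - subsets6_except ?M = set ` set ?M"
    by (auto simp: subsets6_except_def)
  then show "\<forall>S\<in>Pow {1..6} - subsets6_except ?M. \<exists>J\<in>subsets6_except ?M.
      \<not> separated (alt_circuits 6 4) S J"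
    unfolding alt_circuits_6_4 subsets6_except_eq_subseqs[OF sorted]
    by (simp add: separated_def Let_def)
qed

lemma pairwise_separated_subsets6_except:
  "pairwise_separated {1..6} (alt_circuits 6 4)
     (subsets6_except [[2,4], [1,3,6], [1,4,6], [2,4,6], [1,2,4,6], [1,3,4,6], [1,3,5,6]])"
    (is "pairwise_separated _ _ (subsets6_except ?M)")
proof (rule pairwise_separatedI)
  have sorted: "\<forall>xs\<in>set ?M. sorted_wrt (<) xs"
    by simp
  show "subsets6_except ?M \<subseteq> Pow {1..6}"
    by (auto simp: subsets6_except_def)
  show "\<forall>I\<in>subsets6_except ?M. \<forall>J\<in>subsets6_except ?M. separated (alt_circuits 6 4) I J"
    unfolding alt_circuits_6_4 subsets6_except_eq_subseqs[OF sorted]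
    by (simp add: separated_def Let_def)
qed

theorem lemma11p2:
  shows "\<not> pure {1..6::nat} (alt_circuits 6 4)"
  by (rule not_pure_if_larger_separated[OF _ maximal_separated_subsets6_except
        pairwise_separated_subsets6_except])
    (simp_all add: card_subsets6_except)

end
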